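(* Let $f\in\mathcal{C}(1)$ and let $\mathcal{J}=\{I_1,\dots,I_\ell\}$ be finitely many disjoint intervals. Then: (i) $f^{\mathrm{sd},\mathcal{J}}$ is constant on each $I\in\mathcal{J}$; (ii) for all $x,y\in\mathbb{R}$, $f^{\mathrm{sd},\mathcal{J}}(x)\ge f(x)-\sum_{I\in\mathcal{J}}\Delta_I(f)$ and $(f^{\mathrm{sd},\mathcal{J}}(x)-f^{\mathrm{sd},\mathcal{J}}(y))_+\le(f(x)-f(y))_+$. As a consequence, $E(f^{\mathrm{sd},\mathcal{J}})\le E(f)$.
   Context: For $x\in\mathbb{R}$, $\mathbb{P}^{\rm BM}_x$ is the law of one-dimensional Brownian motion $(B_t)$ started at $x$, and $\tau_y:=\inf\{t\ge0:B_t=y\}$. $\mathcal{C}(1)$ is the set of functions $f:\mathbb{R}\to[0,\infty)$ that are non-increasing on $(-\infty,0]$, non-decreasing on $[0,\infty)$, with $\lim_{x\to0}f(x)=0$, $\sup_{\mathbb{R}}f\le1$ and $\lim_{x\to\infty}f(x)=1$; $E(f):=-\int_{\mathbb{R}}\log\mathbb{P}^{\rm BM}_x(\tau_y\ge f(y)-f(x)\ \forall y\in\mathbb{R})\,\mathrm{d}x$. The intervals $I_i$ have endpoints $a_i<b_i$ (possibly $\pm\infty$), open, closed or half-open. For an interval $I$ and a function $g$, $M_I(g):=\sup_{y\in I}g(y)$, $m_I(g):=\inf_{y\in I}g(y)$, $\Delta_I(g):=M_I(g)-m_I(g)$. Soft deformation: $f^{[0]}:=f$ and for $k=1,\dots,\ell$,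 with $m_k:=m_{I_k}(f^{[k-1]})$, $M_k:=M_{I_k}(f^{[k-1]})$, set $f^{[k]}(x):=m_k$ if $f^{[k-1]}(x)\in[m_k,M_k]$, $f^{[k]}(x):=f^{[k-1]}(x)$ if $f^{[k-1]}(x)<m_k$, and $f^{[k]}(x):=f^{[k-1]}(x)-\Delta_{I_k}(f^{[k-1]})$ if $f^{[k-1]}(x)>M_k$. Then $f^{\mathrm{sd},\mathcal{J}}:=f^{[\ell]}$. *)

theory Defs
  imports "HOL-Probability.Probability"
begin

definition classC1 :: "(real \<Rightarrow> real) \<Rightarrow> bool" where
  "classC1 f \<longleftrightarrow> (\<forall>x. 0 \<le> f x) \<and> antimono_on {..0} f \<and> mono_on {0..} f
     \<and> (f \<longlongrightarrow> 0) (at 0) \<and> (\<forall>x. f x \<le> 1) \<and> (f \<longlongrightarrow> 1) at_top"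

definition nondeg_interval :: "real set \<Rightarrow> bool" where
  "nondeg_interval I \<longleftrightarrow> is_interval I \<and> (\<exists>a b. a < b \<and> {a<..<b} \<subseteq> I)"

definition supI :: "real set \<Rightarrow> (real \<Rightarrow> real) \<Rightarrow> real" where
  "supI I g = (SUP y\<in>I. g y)"
definition infI :: "real set \<Rightarrow> (real \<Rightarrow> real) \<Rightarrow> real" where
  "infI I g = (INF y\<in>I. g y)"
definition DeltaI :: "real set \<Rightarrow> (real \<Rightarrow> real) \<Rightarrow> real" where
  "DeltaI I g = supI I g - infI I g"

definition sd_step :: "real set \<Rightarrow> (real \<Rightarrow> real) \<Rightarrow> real \<Rightarrow> real" where
  "sd_step I g x =
     (if infI I g \<le> g x \<and> g x \<le> supI I g then infI I g
      else if g x < infI I g then g x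
      else g x - DeltaI I g)"

definition soft_deform :: "real set list \<Rightarrow> (real \<Rightarrow> real) \<Rightarrow> real \<Rightarrow> real" where
  "soft_deform Is f = foldl (\<lambda>g I. sd_step I g) f Is"

definition is_BM :: "'a measure \<Rightarrow> (real \<Rightarrow> 'a \<Rightarrow> real) \<Rightarrow> real \<Rightarrow> bool" where
  "is_BM M B x \<longleftrightarrow> prob_space M
     \<and> (\<forall>t. B t \<in> borel_measurable M)
     \<and> (\<forall>\<omega>\<in>space M. B 0 \<omega> = x \<and> continuous_on {0..} (\<lambda>t. B t \<omega>))
     \<and> (\<forall>s t. 0 \<le> s \<and> s < t \<longrightarrow>
           distributed M lborel (\<lambda>\<omega>. B t \<omega> - B s \<omega>) (\<lambda>z. ennreal (normal_density 0 (sqrt (t - s)) z)))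
     \<and> (\<forall>(ts::nat \<Rightarrow> real) n. 0 \<le> ts 0 \<and> (\<forall>i<n. ts i < ts (Suc i)) \<longrightarrow>
           prob_space.indep_vars M (\<lambda>_. borel) (\<lambda>i \<omega>. B (ts (Suc i)) \<omega> - B (ts i) \<omega>) {..<n})"

text \<open>Hitting time tau_y (infinite if y is never hit).\<close>
definition hit_time :: "(real \<Rightarrow> 'a \<Rightarrow> real) \<Rightarrow> 'a \<Rightarrow> real \<Rightarrow> ereal" where
  "hit_time B \<omega> y = Inf {ereal t | t. 0 \<le> t \<and> B t \<omega> = y}"

definition noncross_prob :: "'a measure \<Rightarrow> (real \<Rightarrow> 'a \<Rightarrow> real) \<Rightarrow> (real \<Rightarrow> real) \<Rightarrow> real \<Rightarrow> real" where
  "noncross_prob M B f x =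
     measure M {\<omega>\<in>space M. \<forall>y. ereal (f y - f x) \<le> hit_time B \<omega> y}"

definition neglog :: "real \<Rightarrow> ennreal" where
  "neglog p = (if p \<le> 0 then \<infinity> else ennreal (- ln p))"

text \<open>E(f), where Ms x / Bs x is a Brownian motion started at x.\<close>
definition energy :: "(real \<Rightarrow> 'a measure) \<Rightarrow> (real \<Rightarrow> real \<Rightarrow> 'a \<Rightarrow> real) \<Rightarrow> (real \<Rightarrow> real) \<Rightarrow> ennreal" where
  "energy Ms Bs f = (\<integral>\<^sup>+ x. neglog (noncross_prob (Ms x) (Bs x) f x) \<partial>lborel)"

end

theory Submission
  imports Defs
begin

text \<open>
  A step of the soft deformation replaces g by \<phi> \<circ> g, where the non-decreasing map \<phi>
  collapses [m, M] (the range of g on the interval) to m and shifts everything above M down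
  by M - m. Such a \<phi> satisfies (\<phi> a - \<phi> b)_+ \<le> (a - b)_+ and \<phi> a \<ge> a - (M - m). Along the
  list of intervals the rises of the deformed function therefore stay dominated by those of f,
  which also bounds its oscillation on each interval by that of f and gives the lower bound;
  constancy on an interval survives later steps because they map equal values to equal values.
  Domination of rises means that a Brownian path staying below the line f x + t also stays
  below the corresponding line for the deformed function, so every non-crossing probability
  increases and the energy decreases. The non-crossing event is measurable because the
  deformed function inherits from f that its sublevel sets are intervals, so by continuity of
  the paths the event is cut out by countably many conditions.
\<close>

definition rises_le :: "(real \<Rightarrow> real) \<Rightarrow> (real \<Rightarrow> real) \<Rightarrow> bool" where
  "rises_le g f \<longleftrightarrow> (\<forall>x y. max 0 (g x - g y) \<le> max 0 (f x - f y))"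

lemma rises_leD: "rises_le g f \<Longrightarrow> g x - g y \<le> max 0 (f x - f y)"
  unfolding rises_le_def by (metis max.cobounded2 order_trans)

lemma rises_le_refl: "rises_le f f"
  unfolding rises_le_def by simp

lemma rises_le_trans: "rises_le h g \<Longrightarrow> rises_le g f \<Longrightarrow> rises_le h f"
  unfolding rises_le_def by (metis order_trans)

lemma rises_le_mono: "rises_le g f \<Longrightarrow> f x \<le> f y \<Longrightarrow> g x \<le> g y"
  using rises_leD[of g f x y] by simp

lemma rises_le_diff_le_DeltaI:
  assumes "rises_le g f" "bdd_above (f ` I)" "bdd_below (f ` I)" "x \<in> I" "y \<in> I"
  shows "g x - g y \<le> DeltaI I f"
proof -
  have "f x \<le> supI I f" "f y \<le> supI I f" "infI I f \<le> f y"
    unfolding supI_def infI_def using assms by (auto intro: cSup_upper cInf_lower)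
  then show ?thesis using rises_leD[OF assms(1), of x y] unfolding DeltaI_def by linarith
qed

lemma rises_le_bdd_image:
  assumes "rises_le g f" "bdd_above (f ` I)" "bdd_below (f ` I)"
  shows "bdd_above (g ` I)" "bdd_below (g ` I)"
proof -
  have "bdd_above (g ` I) \<and> bdd_below (g ` I)"
  proof (cases "I = {}")
    case False
    then obtain x0 where x0: "x0 \<in> I" by blast
    have upper: "g y \<le> g x0 + DeltaI I f" and lower: "g x0 - DeltaI I f \<le> g y"
      if "y \<in> I" for y
      using rises_le_diff_le_DeltaI[OF assms that x0] rises_le_diff_le_DeltaI[OF assms x0 that]
      by linarith+
    have "bdd_above (g ` I)" using upper by (rule bdd_aboveI2)
    moreover have "bdd_below (g ` I)" using lower by (rule bdd_belowI2)
    ultimately show ?thesis ..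
  qed simp
  then show "bdd_above (g ` I)" "bdd_below (g ` I)" by simp_all
qed

lemma rises_le_DeltaI_le:
  assumes "rises_le g f" "bdd_above (f ` I)" "bdd_below (f ` I)" "I \<noteq> {}"
  shows "DeltaI I g \<le> DeltaI I f"
proof -
  have "g y - DeltaI I f \<le> infI I g" if "y \<in> I" for y
    unfolding infI_def using rises_le_diff_le_DeltaI[OF assms(1-3) that] \<open>I \<noteq> {}\<close>
    by (intro cINF_greatest) (auto simp: algebra_simps)
  then have "supI I g \<le> infI I g + DeltaI I f"
    unfolding supI_def using \<open>I \<noteq> {}\<close> by (auto intro!: cSUP_least simp: algebra_simps)
  then show ?thesis unfolding DeltaI_def by simp
qed

lemma infI_le_supI:
  assumes "I \<noteq> {}" "bdd_above (g ` I)" "bdd_below (g ` I)"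
  shows "infI I g \<le> supI I g"
proof -
  obtain x where "x \<in> I" using assms(1) by blast
  then show ?thesis
    unfolding infI_def supI_def using assms by (meson cINF_lower cSUP_upper order_trans)
qed

lemma rises_le_sd_step:
  assumes "infI I g \<le> supI I g"
  shows "rises_le (sd_step I g) g"
  unfolding rises_le_def sd_step_def DeltaI_def using assms by (smt (verit))

lemma sd_step_ge:
  assumes "infI I g \<le> supI I g"
  shows "g x - DeltaI I g \<le> sd_step I g x"
  unfolding sd_step_def DeltaI_def using assms by (smt (verit))

lemma sd_step_eq_infI:
  assumes "bdd_above (g ` I)" "bdd_below (g ` I)" "x \<in> I"
  shows "sd_step I g x = infI I g"
proof -
  have "infI I g \<le> g x" "g x \<le> supI I g"
    unfolding infI_def supI_def using assms by (auto intro: cInf_lower cSup_upper)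
  then show ?thesis unfolding sd_step_def by simp
qed

lemma sd_step_cong: "g x = g y \<Longrightarrow> sd_step I g x = sd_step I g y"
  unfolding sd_step_def by simp

lemma soft_deform_Nil [simp]: "soft_deform [] f = f"
  unfolding soft_deform_def by simp

lemma soft_deform_snoc [simp]: "soft_deform (Is @ [I]) f = sd_step I (soft_deform Is f)"
  unfolding soft_deform_def by simp

lemma rises_le_soft_deform:
  assumes "\<forall>I\<in>set Is. I \<noteq> {} \<and> bdd_above (f ` I) \<and> bdd_below (f ` I)"
  shows "rises_le (soft_deform Is f) f"
  using assms
proof (induction Is rule: rev_induct)
  case Nil
  then show ?case by (simp add: rises_le_refl)
next
  case (snoc I Is)
  let ?g = "soft_deform Is f"
  have g: "rises_le ?g f" using snoc by simp
  have I: "I \<noteq> {}" "bdd_above (f ` I)" "bdd_below (f ` I)" using snoc.prems by auto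
  have "infI I ?g \<le> supI I ?g"
    using infI_le_supI[OF I(1) rises_le_bdd_image[OF g I(2,3)]] .
  then show ?case using rises_le_trans[OF rises_le_sd_step g] by simp
qed

lemma soft_deform_ge:
  assumes "\<forall>I\<in>set Is. I \<noteq> {} \<and> bdd_above (f ` I) \<and> bdd_below (f ` I)"
  shows "f x - (\<Sum>I\<leftarrow>Is. DeltaI I f) \<le> soft_deform Is f x"
  using assms
proof (induction Is rule: rev_induct)
  case (snoc I Is)
  let ?g = "soft_deform Is f"
  have hyp: "\<forall>I\<in>set Is. I \<noteq> {} \<and> bdd_above (f ` I) \<and> bdd_below (f ` I)"
    and I: "I \<noteq> {}" "bdd_above (f ` I)" "bdd_below (f ` I)"
    using snoc.prems by auto
  have g: "rises_le ?g f" using rises_le_soft_deform[OF hyp] .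
  have "infI I ?g \<le> supI I ?g"
    using infI_le_supI[OF I(1) rises_le_bdd_image[OF g I(2,3)]] .
  then have "?g x - DeltaI I ?g \<le> sd_step I ?g x" by (rule sd_step_ge)
  moreover have "DeltaI I ?g \<le> DeltaI I f" using rises_le_DeltaI_le[OF g I(2,3,1)] .
  moreover have "f x - (\<Sum>J\<leftarrow>Is. DeltaI J f) \<le> ?g x" using snoc.IH[OF hyp] .
  ultimately show ?case by simp
qed simp

lemma soft_deform_const_on:
  assumes "\<forall>I\<in>set Is. I \<noteq> {} \<and> bdd_above (f ` I) \<and> bdd_below (f ` I)"
    and "I \<in> set Is" "x \<in> I" "y \<in> I"
  shows "soft_deform Is f x = soft_deform Is f y"
  using assms
proof (induction Is rule: rev_induct)
  case (snoc J Is)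
  let ?g = "soft_deform Is f"
  have hyp: "\<forall>I\<in>set Is. I \<noteq> {} \<and> bdd_above (f ` I) \<and> bdd_below (f ` I)"
    and J: "bdd_above (f ` J)" "bdd_below (f ` J)"
    using snoc.prems(1) by auto
  show ?case
  proof (cases "I = J")
    case True
    note bdd = rises_le_bdd_image[OF rises_le_soft_deform[OF hyp] J]
    show ?thesis
      using sd_step_eq_infI[OF bdd snoc.prems(3)[unfolded True]]
        sd_step_eq_infI[OF bdd snoc.prems(4)[unfolded True]] by simp
  next
    case False
    then have "I \<in> set Is" using snoc.prems(2) by simp
    then have "?g x = ?g y" using snoc.IH[OF hyp _ snoc.prems(3,4)] by blast
    then show ?thesis unfolding soft_deform_snoc by (rule sd_step_cong)
  qed
qed simp

lemma quasiconvex_classC1: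
  assumes "classC1 f" "a \<le> x" "x \<le> b"
  shows "f x \<le> max (f a) (f b)"
proof -
  have anti: "antimono_on {..0} f" and mono: "mono_on {0..} f"
    using assms(1) unfolding classC1_def by auto
  show ?thesis
  proof (cases "0 \<le> x")
    case True
    then have "f x \<le> f b" using mono_onD[OF mono] assms(3) by simp
    then show ?thesis by simp
  next
    case False
    then have "f x \<le> f a" using monotone_onD[OF anti] assms(2) by simp
    then show ?thesis by simp
  qed
qed

lemma rises_le_is_interval_sublevel:
  assumes rises: "rises_le g f"
    and quasiconvex: "\<And>a x b. a \<le> x \<Longrightarrow> x \<le> b \<Longrightarrow> f x \<le> max (f a) (f b)"
  shows "is_interval {y. g y \<le> d}"
  unfolding is_interval_1
proof (intro ballI allI impI)
  fix a b x assume "a \<in> {y. g y \<le> d}" "b \<in> {y. g y \<le> d}" "a \<le> x \<and> x \<le> b"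
  moreover have "f x \<le> f a \<or> f x \<le> f b"
    using quasiconvex[of a x b] \<open>a \<le> x \<and> x \<le> b\<close> by linarith
  then have "g x \<le> g a \<or> g x \<le> g b" using rises_le_mono[OF rises] by blast
  ultimately show "x \<in> {y. g y \<le> d}" by auto
qed

lemma closure_Rats_greaterThanLessThan:
  "a < b \<Longrightarrow> closure ({a<..<b} \<inter> \<rat>) = {a..b :: real}"
  using closure_open_Int_superset[of "{a<..<b}" \<rat>] Rats_closure_real by simp

lemma closure_image_Rats_eq:
  fixes X :: "real \<Rightarrow> real"
  assumes "a < b" "continuous_on {a..b} X"
  shows "closure (X ` ({a<..<b} \<inter> \<rat>)) = X ` {a..b}"
proof
  let ?Q = "{a<..<b} \<inter> \<rat>"
  show "X ` {a..b} \<subseteq> closure (X ` ?Q)"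
    using image_closure_subset[of ?Q X "closure (X ` ?Q)"] assms
    by (simp add: closure_Rats_greaterThanLessThan closure_subset)
  have "closed (X ` {a..b})"
    by (intro compact_imp_closed compact_continuous_image assms(2) compact_Icc)
  then show "closure (X ` ?Q) \<subseteq> X ` {a..b}"
    by (rule closure_minimal[rotated]) auto
qed

lemma path_in_interval_iff:
  fixes X :: "real \<Rightarrow> real"
  assumes "a < b" "continuous_on {a..b} X" "is_interval L"
  shows "(\<forall>t\<in>{a..b}. X t \<in> L) \<longleftrightarrow>
    Inf (X ` ({a<..<b} \<inter> \<rat>)) \<in> L \<and> Sup (X ` ({a<..<b} \<inter> \<rat>)) \<in> L"
proof -
  define S where "S = X ` ({a<..<b} \<inter> \<rat>)"
  have cl: "closure S = X ` {a..b}"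
    unfolding S_def using closure_image_Rats_eq[OF assms(1,2)] .
  have "S \<noteq> {}" unfolding S_def using Rats_dense_in_real[OF assms(1)] by auto
  moreover have "bounded S"
    using bounded_subset[OF compact_imp_bounded closure_subset[of S]] cl
      compact_continuous_image[OF assms(2) compact_Icc] by simp
  then have bdd: "bdd_above S" "bdd_below S"
    by (simp_all add: bounded_imp_bdd_above bounded_imp_bdd_below)
  ultimately have ends: "Inf S \<in> X ` {a..b}" "Sup S \<in> X ` {a..b}"
    using closure_contains_Inf closure_contains_Sup cl by auto
  have "S \<subseteq> {Inf S..Sup S}" using bdd by (auto intro: cInf_lower cSup_upper)
  then have between: "X ` {a..b} \<subseteq> {Inf S..Sup S}"
    using closure_minimal[of S "{Inf S..Sup S}"] cl by simp
  show ?thesis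
    unfolding S_def[symmetric]
  proof
    assume "\<forall>t\<in>{a..b}. X t \<in> L"
    then show "Inf S \<in> L \<and> Sup S \<in> L" using ends by auto
  next
    assume "Inf S \<in> L \<and> Sup S \<in> L"
    then show "\<forall>t\<in>{a..b}. X t \<in> L"
      using between assms(3) unfolding is_interval_1 by (meson atLeastAtMost_iff image_subset_iff)
  qed
qed

lemma sets_path_in_interval:
  fixes B :: "real \<Rightarrow> 'a \<Rightarrow> real"
  assumes meas: "\<And>t. B t \<in> borel_measurable M"
    and cont: "\<And>\<omega>. \<omega> \<in> space M \<Longrightarrow> continuous_on {a..b} (\<lambda>t. B t \<omega>)"
    and "a < b" "is_interval L"
  shows "{\<omega>\<in>space M. \<forall>t\<in>{a..b}. B t \<omega> \<in> L} \<in> sets M"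
proof -
  let ?Q = "{a<..<b} \<inter> \<rat>"
  have "countable ?Q" using countable_rat by blast
  have bdd: "bdd_above ((\<lambda>t. B t \<omega>) ` ?Q)" "bdd_below ((\<lambda>t. B t \<omega>) ` ?Q)"
    if "\<omega> \<in> space M" for \<omega>
  proof -
    have "bounded ((\<lambda>t. B t \<omega>) ` {a..b})"
      by (intro compact_imp_bounded compact_continuous_image cont that compact_Icc)
    then have "bounded ((\<lambda>t. B t \<omega>) ` ?Q)" by (rule bounded_subset) auto
    then show "bdd_above ((\<lambda>t. B t \<omega>) ` ?Q)" "bdd_below ((\<lambda>t. B t \<omega>) ` ?Q)"
      by (simp_all add: bounded_imp_bdd_above bounded_imp_bdd_below)
  qed
  have "{\<omega>\<in>space M. \<forall>t\<in>{a..b}. B t \<omega> \<in> L} =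
      {\<omega>\<in>space M. (INF t\<in>?Q. B t \<omega>) \<in> L \<and> (SUP t\<in>?Q. B t \<omega>) \<in> L}"
    using path_in_interval_iff[OF \<open>a < b\<close> cont \<open>is_interval L\<close>] by auto
  also have "\<dots> = ((\<lambda>\<omega>. INF t\<in>?Q. B t \<omega>) -` L \<inter> space M) \<inter> ((\<lambda>\<omega>. SUP t\<in>?Q. B t \<omega>) -` L \<inter> space M)"
    by auto
  also have "\<dots> \<in> sets M"
    using real_interval_borel_measurable[OF \<open>is_interval L\<close>]
      borel_measurable_cINF[OF \<open>countable ?Q\<close> meas bdd(2)]
      borel_measurable_cSUP[OF \<open>countable ?Q\<close> meas bdd(1)]
    by (intro sets.Int measurable_sets)
  finally show ?thesis .
qed

lemma sets_path_below_line:
  fixes B :: "real \<Rightarrow> 'a \<Rightarrow> real" and h :: "real \<Rightarrow> real"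
  assumes meas: "\<And>t. B t \<in> borel_measurable M"
    and cont: "\<And>\<omega>. \<omega> \<in> space M \<Longrightarrow> continuous_on {0..} (\<lambda>t. B t \<omega>)"
    and sublevel: "\<And>d. is_interval {y. h y \<le> d}"
  shows "{\<omega>\<in>space M. \<forall>t\<ge>0. h (B t \<omega>) \<le> c + t} \<in> sets M"
proof -
  define \<delta> :: "nat \<Rightarrow> real" where "\<delta> n = 1 / real (Suc n)" for n
  have \<delta>_pos: "0 < \<delta> n" for n unfolding \<delta>_def by simp
  \<comment> \<open>On the k-th cell of a grid of mesh \<delta> n the line c + t is replaced by its value at
    the right end of the cell; letting the mesh go to 0 recovers the event.\<close>
  define S where "S n k = {\<omega>\<in>space M. \<forall>t\<in>{real k * \<delta> n..(real k + 1) * \<delta> n}.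
      B t \<omega> \<in> {y. h y \<le> c + (real k + 1) * \<delta> n}}" for n k :: nat
  have "S n k \<in> sets M" for n k
    unfolding S_def
  proof (rule sets_path_in_interval[OF meas _ _ sublevel])
    show "continuous_on {real k * \<delta> n..(real k + 1) * \<delta> n} (\<lambda>t. B t \<omega>)"
      if "\<omega> \<in> space M" for \<omega>
      using \<delta>_pos[of n] by (intro continuous_on_subset[OF cont[OF that]]) auto
  qed (use \<delta>_pos in simp)
  moreover have "{\<omega>\<in>space M. \<forall>t\<ge>0. h (B t \<omega>) \<le> c + t} = (\<Inter>n. \<Inter>k. S n k)"
  proof (intro equalityI subsetI)
    fix \<omega> assume \<omega>: "\<omega> \<in> {\<omega>\<in>space M. \<forall>t\<ge>0. h (B t \<omega>) \<le> c + t}"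
    have "h (B t \<omega>) \<le> c + (real k + 1) * \<delta> n"
      if "real k * \<delta> n \<le> t" "t \<le> (real k + 1) * \<delta> n" for n k t
    proof -
      have "0 \<le> t" using that(1) \<delta>_pos[of n] by (smt (verit) zero_le_mult_iff of_nat_0_le_iff)
      then show ?thesis using \<omega> that(2) by force
    qed
    then show "\<omega> \<in> (\<Inter>n. \<Inter>k. S n k)" using \<omega> unfolding S_def by auto
  next
    fix \<omega> assume \<omega>: "\<omega> \<in> (\<Inter>n. \<Inter>k. S n k)"
    have "h (B t \<omega>) \<le> c + t" if "0 \<le> t" for t
    proof (rule field_le_epsilon)
      fix e :: real assume "0 < e"
      then obtain n where n: "\<delta> n < e" unfolding \<delta>_def by (rule nat_approx_posE)
      define k where "k = nat \<lfloor>t / \<delta> n\<rfloor>"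
      have "real k = of_int \<lfloor>t / \<delta> n\<rfloor>"
        unfolding k_def using \<open>0 \<le> t\<close> \<delta>_pos[of n] by simp
      then have k: "real k * \<delta> n \<le> t" "t \<le> (real k + 1) * \<delta> n"
        using floor_divide_lower[OF \<delta>_pos, of t n] floor_divide_upper[OF \<delta>_pos, of t n]
        by simp_all
      then have "h (B t \<omega>) \<le> c + (real k + 1) * \<delta> n"
        using \<omega> unfolding S_def by auto
      also have "\<dots> \<le> c + t + e" using k(1) n by (simp add: algebra_simps)
      finally show "h (B t \<omega>) \<le> c + t + e" .
    qed
    then show "\<omega> \<in> {\<omega>\<in>space M. \<forall>t\<ge>0. h (B t \<omega>) \<le> c + t}"
      using \<omega> unfolding S_def by auto
  qed
  ultimately show ?thesis by auto
qed

lemma le_hit_time_iff: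
  "(\<forall>y. ereal (h y - c) \<le> hit_time B \<omega> y) \<longleftrightarrow> (\<forall>t\<ge>0. h (B t \<omega>) \<le> c + t)"
proof
  assume le: "\<forall>y. ereal (h y - c) \<le> hit_time B \<omega> y"
  show "\<forall>t\<ge>0. h (B t \<omega>) \<le> c + t"
  proof (intro allI impI)
    fix t :: real assume "0 \<le> t"
    have "ereal (h (B t \<omega>) - c) \<le> hit_time B \<omega> (B t \<omega>)" using le by blast
    also have "\<dots> \<le> ereal t"
      unfolding hit_time_def using \<open>0 \<le> t\<close> by (intro Inf_lower) blast
    finally show "h (B t \<omega>) \<le> c + t" by simp
  qed
next
  assume "\<forall>t\<ge>0. h (B t \<omega>) \<le> c + t"
  then show "\<forall>y. ereal (h y - c) \<le> hit_time B \<omega> y"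
    unfolding hit_time_def by (force intro!: Inf_greatest)
qed

lemma noncross_prob_mono:
  fixes B :: "real \<Rightarrow> 'a \<Rightarrow> real"
  assumes "finite_measure M"
    and meas: "\<And>t. B t \<in> borel_measurable M"
    and cont: "\<And>\<omega>. \<omega> \<in> space M \<Longrightarrow> continuous_on {0..} (\<lambda>t. B t \<omega>)"
    and rises: "rises_le g f" and sublevel: "\<And>d. is_interval {y. g y \<le> d}"
  shows "noncross_prob M B f x \<le> noncross_prob M B g x"
proof -
  have "g (B t \<omega>) \<le> g x + t" if "f (B t \<omega>) \<le> f x + t" "0 \<le> t" for t \<omega>
    using rises_leD[OF rises, of "B t \<omega>" x] that by simp
  then have "{\<omega>\<in>space M. \<forall>t\<ge>0. f (B t \<omega>) \<le> f x + t} \<subseteq> {\<omega>\<in>space M. \<forall>t\<ge>0. g (B t \<omega>) \<le> g x + t}"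
    by blast
  then show ?thesis
    unfolding noncross_prob_def le_hit_time_iff
    using sets_path_below_line[OF meas cont sublevel]
    by (intro finite_measure.finite_measure_mono[OF \<open>finite_measure M\<close>])
qed

lemma neglog_antimono: "p \<le> q \<Longrightarrow> neglog q \<le> neglog p"
  unfolding neglog_def by (auto intro!: ennreal_leI)

lemma energy_antimono:
  assumes "\<And>x. noncross_prob (Ms x) (Bs x) f x \<le> noncross_prob (Ms x) (Bs x) g x"
  shows "energy Ms Bs g \<le> energy Ms Bs f"
  unfolding energy_def using assms by (intro nn_integral_mono neglog_antimono)

lemma nondeg_interval_nonempty:
  assumes "nondeg_interval I"
  shows "I \<noteq> {}"
proof -
  obtain a b where "a < b" "{a<..<b} \<subseteq> I"
    using assms unfolding nondeg_interval_def by blast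
  then have "(a + b) / 2 \<in> I" by auto
  then show ?thesis by blast
qed

theorem lemma6p2:
  fixes f :: "real \<Rightarrow> real" and Is :: "real set list"
    and Ms :: "real \<Rightarrow> 'a measure" and Bs :: "real \<Rightarrow> real \<Rightarrow> 'a \<Rightarrow> real"
  assumes f: "classC1 f"
    and intervals: "\<forall>k<length Is. nondeg_interval (Is ! k)"
    and disjoint: "\<forall>i<length Is. \<forall>j<length Is. i \<noteq> j \<longrightarrow> Is ! i \<inter> Is ! j = {}"
    and BM: "\<forall>x. is_BM (Ms x) (Bs x) x"
  shows "(\<forall>k<length Is. \<forall>x\<in>Is ! k. \<forall>y\<in>Is ! k. soft_deform Is f x = soft_deform Is f y)
    \<and> (\<forall>x. soft_deform Is f x \<ge> f x - (\<Sum>k<length Is. DeltaI (Is ! k) f))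
    \<and> (\<forall>x y. max 0 (soft_deform Is f x - soft_deform Is f y) \<le> max 0 (f x - f y))
    \<and> energy Ms Bs (soft_deform Is f) \<le> energy Ms Bs f"
proof -
  have "0 \<le> f x \<and> f x \<le> 1" for x using f unfolding classC1_def by auto
  then have "bdd_above (f ` I)" "bdd_below (f ` I)" for I
    by (meson bdd_aboveI2 bdd_belowI2)+
  then have hyp: "\<forall>I\<in>set Is. I \<noteq> {} \<and> bdd_above (f ` I) \<and> bdd_below (f ` I)"
    using intervals nondeg_interval_nonempty by (simp add: all_set_conv_all_nth)
  have rises: "rises_le (soft_deform Is f) f" by (rule rises_le_soft_deform[OF hyp])
  have "noncross_prob (Ms x) (Bs x) f x \<le> noncross_prob (Ms x) (Bs x) (soft_deform Is f) x" for x
  proof (rule noncross_prob_mono[OF _ _ _ rises rises_le_is_interval_sublevel[OF rises]])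
    show "finite_measure (Ms x)" using BM unfolding is_BM_def by (simp add: prob_space.finite_measure)
    show "Bs x t \<in> borel_measurable (Ms x)" for t using BM unfolding is_BM_def by simp
    show "continuous_on {0..} (\<lambda>t. Bs x t \<omega>)" if "\<omega> \<in> space (Ms x)" for \<omega>
      using BM that unfolding is_BM_def by simp
  qed (rule quasiconvex_classC1[OF f])
  then have "energy Ms Bs (soft_deform Is f) \<le> energy Ms Bs f" by (rule energy_antimono)
  moreover have "\<forall>k<length Is. \<forall>x\<in>Is ! k. \<forall>y\<in>Is ! k. soft_deform Is f x = soft_deform Is f y"
    using soft_deform_const_on[OF hyp nth_mem] by blast
  moreover have "(\<Sum>I\<leftarrow>Is. DeltaI I f) = (\<Sum>k<length Is. DeltaI (Is ! k) f)"
    by (simp add: sum_list_sum_nth atLeast0LessThan)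
  then have "\<forall>x. soft_deform Is f x \<ge> f x - (\<Sum>k<length Is. DeltaI (Is ! k) f)"
    using soft_deform_ge[OF hyp] by simp
  moreover have "\<forall>x y. max 0 (soft_deform Is f x - soft_deform Is f y) \<le> max 0 (f x - f y)"
    using rises unfolding rises_le_def .
  ultimately show ?thesis by blast
qed

end
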